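(* We have $$ \mathrm m(1+x_1+x_2+x_3+x_2x_3) =-\frac1{2\pi}\int_0^1{}_2F_1\left(\tfrac12,\tfrac12;1;1-\frac{x^2}{16}\right)\log x\,dx. $$
   Context: For a nonzero Laurent polynomial $P(x_1,\dots,x_N)$, the (logarithmic) Mahler measure is $\mathrm m(P)=\int_{[0,1]^N}\log|P(e^{2\pi i\theta_1},\dots,e^{2\pi i\theta_N})|\,d\theta_1\cdots d\theta_N$. Here ${}_2F_1(a_1,a_2;b_2;z)=\sum_{n\ge0}\frac{(a_1)_n(a_2)_n}{(b_2)_n}\frac{z^n}{n!}$ is the Gauss hypergeometric function with $(a)_n=\Gamma(a+n)/\Gamma(a)$. *)

theory Defs
  imports "HOL-Analysis.Analysis"
begin

definition mahler_measure3 :: "(complex \<Rightarrow> complex \<Rightarrow> complex \<Rightarrow> complex) \<Rightarrow> real" where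
  "mahler_measure3 P =
     (LINT t : {0..1} \<times> {0..1} \<times> {0..1} | (lborel :: (real \<times> real \<times> real) measure).
        ln (cmod (P (cis (2 * pi * fst t)) (cis (2 * pi * fst (snd t)))
                    (cis (2 * pi * snd (snd t))))))"

definition hyp2F1 :: "real \<Rightarrow> real \<Rightarrow> real \<Rightarrow> real \<Rightarrow> real" where
  "hyp2F1 a1 a2 b2 z =
     (\<Sum>n. pochhammer a1 n * pochhammer a2 n / pochhammer b2 n * z ^ n / fact n)"

end

theory Submission
  imports Defs "HOL-Complex_Analysis.Complex_Analysis"
begin

text \<open>Write the polynomial as \<open>x\<^sub>1 + (1 + x\<^sub>2)(1 + x\<^sub>3)\<close>. Jensen's formula in \<open>x\<^sub>1\<close>
  turns its Mahler measure into the mean of \<open>ln\<^sup>+ \<bar>(1 + x\<^sub>2)(1 + x\<^sub>3)\<bar>\<close> over the torus, and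
  \<open>\<bar>1 + e^(2\<pi>it)\<bar> = 2 \<bar>cos \<pi>t\<bar>\<close>. With \<open>a = cos\<^sup>2 \<pi>s\<close> and \<open>b = cos\<^sup>2 \<pi>t\<close>, which are
  independent and arcsine distributed, this is the expectation of \<open>ln\<^sup>+ (4 \<surd>(ab))\<close>.
  Since \<open>ln (2 \<surd>a)\<close> has mean zero (by the duplication formula for the sine), splitting
  \<open>ln = ln\<^sup>+ - ln\<^sup>-\<close> shows that \<open>ln\<^sup>+ (4 \<surd>(ab))\<close> and \<open>ln\<^sup>- (4 \<surd>(ab))\<close> have the same
  expectation. By Euler's integral representation, the product \<open>ab\<close> has density
  \<open>\<^sub>2F\<^sub>1(1/2, 1/2; 1; 1 - g) / (\<pi> \<surd>g)\<close> on \<open>[0,1]\<close>, and the substitution \<open>g = x\<^sup>2/16\<close>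
  gives the right-hand side.\<close>

section \<open>Jensen's formula on the unit circle\<close>

lemma has_integral_ln_norm_one_plus_cis:
  fixes c :: complex assumes c: "cmod c < 1"
  shows "((\<lambda>t. ln (cmod (1 + c * cis (2*pi*t)))) has_integral 0) {0..1}"
proof -
  define f where "f = (\<lambda>z. Ln (1 + c * z))"
  have nz: "1 + c * z \<notin> \<real>\<^sub>\<le>\<^sub>0" if "cmod z \<le> 1" for z
  proof -
    have "cmod c * cmod z \<le> cmod c * 1" using that by (intro mult_left_mono) auto
    then have "cmod (c * z) < 1" using c by (simp add: norm_mult)
    then have "Re (c*z) > -1" using abs_Re_le_cmod[of "c*z"] by linarith
    then show ?thesis by (auto simp: complex_nonpos_Reals_iff)
  qed
  have "f holomorphic_on cball 0 1"
    unfolding f_def using nz by (intro holomorphic_intros) auto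
  from Cauchy_integral_circlepath_simple[OF this, of 0]
  have "((\<lambda>x. f (circlepath 0 1 x) / (circlepath 0 1 x - 0) *
      vector_derivative (circlepath 0 1) (at x within {0..1})) has_integral 0) {0..1}"
    unfolding has_contour_integral_def by (simp add: f_def)
  then have "((\<lambda>x. (2 * pi * \<i>) * f (cis (2*pi*x))) has_integral 0) {0..1}"
  proof (rule has_integral_eq[rotated])
    fix x :: real assume "x \<in> {0..1}"
    then have "vector_derivative (circlepath 0 1) (at x within {0..1}) =
        2 * pi * \<i> * exp (2 * of_real pi * \<i> * x)"
      by (simp add: vector_derivative_circlepath01)
    then show "f (circlepath 0 1 x) / (circlepath 0 1 x - 0) *
        vector_derivative (circlepath 0 1) (at x within {0..1}) = (2 * pi * \<i>) * f (cis (2*pi*x))"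
      by (simp add: circlepath cis_conv_exp mult_ac)
  qed
  from has_integral_mult_right[OF this, of "1 / (2 * pi * \<i>)"]
  have "((\<lambda>x. f (cis (2*pi*x))) has_integral 0) {0..1}"
    by simp
  from has_integral_linear[OF this bounded_linear_Re]
  have "((\<lambda>x. Re (f (cis (2*pi*x)))) has_integral 0) {0..1}" by (simp add: o_def)
  then show ?thesis
  proof (rule has_integral_eq[rotated])
    fix x
    have "1 + c * cis (2*pi*x) \<noteq> 0" using nz[of "cis (2*pi*x)"] by auto
    then show "Re (f (cis (2*pi*x))) = ln (cmod (1 + c * cis (2*pi*x)))" by (simp add: f_def)
  qed
qed

lemma cis_plus_nonzero: "cmod w \<noteq> 1 \<Longrightarrow> cis x + w \<noteq> 0"
  by (metis add_eq_0_iff norm_cis norm_minus_cancel)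

lemma has_integral_ln_norm_cis_plus:
  fixes w :: complex assumes w: "cmod w \<noteq> 1"
  shows "((\<lambda>t. ln (cmod (cis (2*pi*t) + w))) has_integral ln (max 1 (cmod w))) {0..1}"
proof (cases "cmod w < 1")
  case True
  have "cmod (cis x + w) = cmod (1 + cnj w * cis x)" for x
  proof -
    have "cis x + w = cis x * (1 + w * cis (-x))" by (simp add: algebra_simps cis_mult)
    then have "cmod (cis x + w) = cmod (cnj (1 + w * cis (-x)))"
      by (simp only: complex_mod_cnj norm_mult norm_cis mult_1)
    then show ?thesis by (simp add: cis_cnj)
  qed
  then show ?thesis using has_integral_ln_norm_one_plus_cis[of "cnj w"] True by simp
next
  case False
  then have w1: "cmod w > 1" using w by simp
  then have w0: "w \<noteq> 0" by auto
  have "ln (cmod (cis x + w)) = ln (cmod w) + ln (cmod (1 + (1/w) * cis x))" for x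
  proof -
    have "cis x + w = w * (1 + (1/w) * cis x)" using w0 by (simp add: field_simps)
    moreover have "1 + (1/w) * cis x \<noteq> 0"
      using cis_plus_nonzero[OF w, of x] w0 by (auto simp: field_simps)
    ultimately show ?thesis using w0 by (simp add: norm_mult ln_mult)
  qed
  moreover have "cmod (1/w) < 1" using w1 by (simp add: norm_divide divide_less_eq)
  note has_integral_add[OF has_integral_const_real[of "ln (cmod w)" 0 1]
      has_integral_ln_norm_one_plus_cis[OF this]]
  ultimately show ?thesis using w1 by simp
qed

lemma
  fixes w :: complex assumes w: "cmod w \<noteq> 1"
  shows set_integrable_ln_norm_cis_plus:
      "set_integrable lborel {0..1} (\<lambda>x. ln (cmod (cis (2*pi*x) + w)))"
    and set_integral_ln_norm_cis_plus:
      "(LINT x:{0..1}|lborel. ln (cmod (cis (2*pi*x) + w))) = ln (max 1 (cmod w))"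
proof -
  have "continuous_on {0..1} (\<lambda>x. ln (cmod (cis (2*pi*x) + w)))"
    using cis_plus_nonzero[OF w] by (intro continuous_intros) auto
  then show si: "set_integrable lborel {0..1} (\<lambda>x. ln (cmod (cis (2*pi*x) + w)))"
    unfolding set_integrable_def by (intro borel_integrable_compact) auto
  show "(LINT x:{0..1}|lborel. ln (cmod (cis (2*pi*x) + w))) = ln (max 1 (cmod w))"
    using set_borel_integral_eq_integral(2)[OF si] integral_unique[OF has_integral_ln_norm_cis_plus[OF w]]
    by simp
qed

text \<open>The integrand may be negative, but its positive part is at most \<open>ln (1 + \<bar>w\<bar>)\<close> and
  its mean is nonnegative, so its absolute mean is at most twice that bound.\<close>
lemma nn_integral_norm_ln_norm_cis_plus_le:
  fixes w :: complex assumes w: "cmod w \<noteq> 1"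
  shows "(\<integral>\<^sup>+x. ennreal (norm (indicator {0..1} x * ln (cmod (cis (2*pi*x) + w)))) \<partial>lborel)
           \<le> ennreal (2 * ln (1 + cmod w))"
proof -
  define g where "g x = indicator {0..1} x * ln (cmod (cis (2*pi*x) + w))" for x :: real
  have int: "integrable lborel g"
    using set_integrable_ln_norm_cis_plus[OF w] unfolding set_integrable_def g_def by simp
  have mean: "(\<integral>x. g x \<partial>lborel) \<ge> 0"
    using set_integral_ln_norm_cis_plus[OF w] unfolding set_lebesgue_integral_def g_def by simp
  have "g x \<le> indicator {0..1} x * ln (1 + cmod w)" for x
  proof -
    have "0 < cmod (cis (2*pi*x) + w)" using cis_plus_nonzero[OF w] by simp
    moreover have "cmod (cis (2*pi*x) + w) \<le> 1 + cmod w"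
      using norm_triangle_ineq[of "cis (2*pi*x)" w] by simp
    ultimately have "ln (cmod (cis (2*pi*x) + w)) \<le> ln (1 + cmod w)"
      by (subst ln_le_cancel_iff) (auto simp: add_pos_nonneg)
    then show ?thesis by (simp add: g_def indicator_def)
  qed
  moreover have "integrable lborel (\<lambda>x::real. indicator {0..1} x * ln (1 + cmod w))"
    by (intro integrable_mult_left) (simp add: integrable_indicator_iff)
  ultimately have "(\<integral>x. max 0 (g x) \<partial>lborel) \<le> (\<integral>x. indicator {0..1::real} x * ln (1 + cmod w) \<partial>lborel)"
    using int integrable_max[OF integrable_zero int] by (intro integral_mono) (auto simp: indicator_def)
  also have "\<dots> = ln (1 + cmod w)" by (simp add: measure_def)
  finally have pos: "(\<integral>x. max 0 (g x) \<partial>lborel) \<le> ln (1 + cmod w)" .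
  have "(\<integral>x. norm (g x) \<partial>lborel) = (\<integral>x. 2 * max 0 (g x) - g x \<partial>lborel)"
    by (intro Bochner_Integration.integral_cong) (auto simp: max_def)
  also have "\<dots> = 2 * (\<integral>x. max 0 (g x) \<partial>lborel) - (\<integral>x. g x \<partial>lborel)"
    using int by (simp add: integrable_max)
  finally have "(\<integral>x. norm (g x) \<partial>lborel) \<le> 2 * ln (1 + cmod w)" using pos mean by linarith
  then show ?thesis
    using int nn_integral_eq_integral[of lborel "\<lambda>x. norm (g x)"] unfolding g_def
    by (auto intro: ennreal_leI)
qed

definition ln_plus :: "real \<Rightarrow> real" where "ln_plus x = ln (max 1 x)"

definition ln_minus :: "real \<Rightarrow> real" where "ln_minus x = - ln (min 1 x)"

lemma ln_plus_nonneg: "0 \<le> ln_plus x"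
  unfolding ln_plus_def by simp

lemma ln_minus_nonneg: "0 \<le> x \<Longrightarrow> 0 \<le> ln_minus x"
  unfolding ln_minus_def by (cases "x = 0") (auto simp: min_def)

lemma ln_eq_ln_plus_minus_ln_minus: "0 < x \<Longrightarrow> ln x = ln_plus x - ln_minus x"
  unfolding ln_plus_def ln_minus_def by (cases "x \<le> 1") (auto simp: max_def min_def)

lemma ln_plus_measurable [measurable]: "ln_plus \<in> borel_measurable borel"
  unfolding ln_plus_def by measurable

lemma ln_minus_measurable [measurable]: "ln_minus \<in> borel_measurable borel"
  unfolding ln_minus_def by measurable

text \<open>\<open>ln (xy) = ln x + ln y\<close>, rearranged so that every term is nonnegative.\<close>
lemma ennreal_ln_plus_mult:
  assumes "0 < x" "0 < y"
  shows "ennreal (ln_plus (x * y)) + (ennreal (ln_minus x) + ennreal (ln_minus y)) =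
         ennreal (ln_minus (x * y)) + (ennreal (ln_plus x) + ennreal (ln_plus y))"
proof -
  have "ln (x * y) = ln x + ln y" using assms by (simp add: ln_mult)
  then have "ln_plus (x * y) + (ln_minus x + ln_minus y) = ln_minus (x * y) + (ln_plus x + ln_plus y)"
    using assms by (simp add: ln_eq_ln_plus_minus_ln_minus)
  moreover have "0 \<le> ln_minus x" "0 \<le> ln_minus y" "0 \<le> ln_minus (x * y)"
    using assms by (simp_all add: ln_minus_nonneg)
  ultimately show ?thesis using ln_plus_nonneg by (simp add: ennreal_plus[symmetric] del: ennreal_plus)
qed

lemma cis_measurable [measurable]: "cis \<in> borel_measurable borel"
  by (intro borel_measurable_continuous_onI continuous_intros)

lemma integrable_ln_norm_cis_plus_prod:
  fixes W :: "'a::euclidean_space \<Rightarrow> complex"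
  assumes [measurable]: "W \<in> borel_measurable borel" "B \<in> sets borel"
    and B: "emeasure lborel B < \<infinity>" and bound: "\<And>y. cmod (W y) \<le> R"
    and AE_ne_1: "AE y in lborel. y \<in> B \<longrightarrow> cmod (W y) \<noteq> 1"
  shows "integrable (lborel \<Otimes>\<^sub>M lborel)
    (\<lambda>z. indicator {0..1} (fst z) * (indicator B (snd z) * ln (cmod (cis (2*pi*fst z) + W (snd z)))))"
    (is "integrable _ (\<lambda>z. ?f (fst z) (snd z))")
proof (rule integrableI_bounded)
  show "(\<lambda>z. ?f (fst z) (snd z)) \<in> borel_measurable (lborel \<Otimes>\<^sub>M lborel)" by measurable
  have "AE y in lborel. (\<integral>\<^sup>+x. ennreal (norm (?f x y)) \<partial>lborel) \<le> ennreal (2 * ln (1 + R)) * indicator B y"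
    using AE_ne_1
  proof eventually_elim
    case (elim y)
    show ?case
    proof (cases "y \<in> B")
      case True
      then have "(\<integral>\<^sup>+x. ennreal (norm (?f x y)) \<partial>lborel) \<le> ennreal (2 * ln (1 + cmod (W y)))"
        using nn_integral_norm_ln_norm_cis_plus_le[of "W y"] elim by simp
      also have "\<dots> \<le> ennreal (2 * ln (1 + R))"
      proof -
        have "0 \<le> cmod (W y)" "cmod (W y) \<le> R" using bound[of y] by auto
        then have "ln (1 + cmod (W y)) \<le> ln (1 + R)" by (subst ln_le_cancel_iff) linarith+
        then show ?thesis by (intro ennreal_leI) simp
      qed
      finally show ?thesis using True by simp
    qed simp
  qed
  then have "(\<integral>\<^sup>+z. ennreal (norm (?f (fst z) (snd z))) \<partial>(lborel \<Otimes>\<^sub>M lborel)) \<le>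
      (\<integral>\<^sup>+y. ennreal (2 * ln (1 + R)) * indicator B y \<partial>lborel)"
    by (subst lborel_pair.nn_integral_snd[symmetric]) (measurable, simp add: nn_integral_mono_AE)
  also have "\<dots> < \<infinity>" using B by (simp add: nn_integral_cmult_indicator ennreal_mult_less_top)
  finally show "(\<integral>\<^sup>+z. ennreal (norm (?f (fst z) (snd z))) \<partial>(lborel \<Otimes>\<^sub>M lborel)) < \<infinity>" .
qed

lemma set_integral_ln_norm_cis_plus_prod:
  fixes W :: "'a::euclidean_space \<Rightarrow> complex"
  assumes [measurable]: "W \<in> borel_measurable borel" "B \<in> sets borel"
    and B: "emeasure lborel B < \<infinity>" and bound: "\<And>y. cmod (W y) \<le> R"
    and AE_ne_1: "AE y in lborel. y \<in> B \<longrightarrow> cmod (W y) \<noteq> 1"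
  shows "(LINT t : {0..1} \<times> B | lborel. ln (cmod (cis (2*pi*fst t) + W (snd t)))) =
         (LINT y : B | lborel. ln_plus (cmod (W y)))"
proof -
  define f where "f x y = indicator {0..1} x * (indicator B y * ln (cmod (cis (2*pi*x) + W y)))"
    for x :: real and y :: 'a
  have int: "integrable (lborel \<Otimes>\<^sub>M lborel) (\<lambda>z. f (fst z) (snd z))"
    unfolding f_def using integrable_ln_norm_cis_plus_prod[OF assms] .
  have "(LINT t : {0..1} \<times> B | lborel. ln (cmod (cis (2*pi*fst t) + W (snd t)))) =
      integral\<^sup>L (lborel \<Otimes>\<^sub>M lborel) (\<lambda>z. f (fst z) (snd z))"
    unfolding set_lebesgue_integral_def lborel_prod[symmetric] f_def
    by (intro Bochner_Integration.integral_cong) (auto simp: indicator_times split: prod.splits)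
  also have "\<dots> = (\<integral>y. (\<integral>x. f x y \<partial>lborel) \<partial>lborel)"
    using lborel_pair.integral_snd[of f] int by (simp add: case_prod_beta')
  also have "\<dots> = (LINT y : B | lborel. ln_plus (cmod (W y)))"
    unfolding set_lebesgue_integral_def
  proof (rule integral_cong_AE)
    show "AE y in lborel. (\<integral>x. f x y \<partial>lborel) = indicator B y *\<^sub>R ln_plus (cmod (W y))"
      using AE_ne_1
    proof eventually_elim
      case (elim y)
      show ?case
      proof (cases "y \<in> B")
        case True
        then show ?thesis using elim set_integral_ln_norm_cis_plus[of "W y"]
          by (simp add: f_def ln_plus_def set_lebesgue_integral_def)
      qed (simp add: f_def)
    qed
    show "(\<lambda>y. \<integral>x. f x y \<partial>lborel) \<in> borel_measurable lborel"
      using lborel_pair.integrable_snd[of f] int by (simp add: case_prod_beta')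
  qed measurable
  finally show ?thesis .
qed

section \<open>The arcsine distribution\<close>

text \<open>The density of the law of \<open>cos\<^sup>2 (\<pi>U)\<close> for \<open>U\<close> uniform on \<open>[0,1]\<close>.\<close>
definition arcsine_density :: "real \<Rightarrow> real" where
  "arcsine_density a = 1 / (pi * sqrt (a * (1 - a)))"

definition arcsine_nn_integral :: "(real \<Rightarrow> ennreal) \<Rightarrow> ennreal" where
  "arcsine_nn_integral f =
     (\<integral>\<^sup>+a. f a * ennreal (arcsine_density a) * indicator {0..1} a \<partial>lborel)"

lemma arcsine_density_nonneg: "0 \<le> a \<Longrightarrow> a \<le> 1 \<Longrightarrow> 0 \<le> arcsine_density a"
  unfolding arcsine_density_def by auto

lemma arcsine_density_measurable [measurable]: "arcsine_density \<in> borel_measurable borel"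
  unfolding arcsine_density_def by measurable

lemma arcsine_density_one_minus: "arcsine_density (1 - a) = arcsine_density a"
  unfolding arcsine_density_def by (simp add: mult.commute)

lemma arcsine_density_eq_powr:
  "0 < a \<Longrightarrow> a < 1 \<Longrightarrow>
     arcsine_density a = 1 / pi * (a powr (1/2 - 1) * (1 - a) powr (1/2 - 1))"
  unfolding arcsine_density_def
  by (simp add: powr_minus_divide powr_half_sqrt[symmetric] powr_minus real_sqrt_mult)

lemma nn_integral_cos_sq_upper_half:
  fixes f :: "real \<Rightarrow> ennreal" assumes [measurable]: "f \<in> borel_measurable borel"
  shows "(\<integral>\<^sup>+s. f (cos (pi * s)^2) * indicator {1/2..1} s \<partial>lborel) =
         (\<integral>\<^sup>+a. f a * ennreal (arcsine_density a / 2) * indicator {0..1} a \<partial>lborel)"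
proof -
  define g' where "g' s = - (2 * pi * cos (pi * s) * sin (pi * s))" for s
  have cos_nonpos: "cos (pi * s) \<le> 0" if "s \<in> {1/2..1}" for s
  proof -
    have "pi/2 \<le> pi * s" "pi * s \<le> pi" using that by auto
    then have "0 \<le> cos (pi - pi * s)" using pi_gt_zero by (intro cos_ge_zero) linarith+
    then show ?thesis by simp
  qed
  have g'_nonneg: "g' s \<ge> 0" if "s \<in> {1/2..1}" for s
    using cos_nonpos[OF that] sin_ge_zero[of "pi * s"] that
    by (auto simp: g'_def mult_le_0_iff)
  have "((\<lambda>s. cos (pi * s)^2) has_real_derivative g' s) (at s)" for s
    unfolding g'_def by (auto intro!: derivative_eq_intros simp: algebra_simps)
  moreover have "continuous_on {1/2..1} g'" unfolding g'_def by (intro continuous_intros)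
  ultimately have "(\<integral>\<^sup>+a. (f a * ennreal (arcsine_density a / 2)) *
        indicator {cos (pi * (1/2))^2..cos (pi * 1)^2} a \<partial>lborel) =
      (\<integral>\<^sup>+s. (f (cos (pi * s)^2) * ennreal (arcsine_density (cos (pi * s)^2) / 2)) * g' s *
        indicator {1/2..1} s \<partial>lborel)"
    using g'_nonneg by (intro nn_integral_substitution_aux) auto
  also have "\<dots> = (\<integral>\<^sup>+s. f (cos (pi * s)^2) * indicator {1/2..1} s \<partial>lborel)"
  proof (rule nn_integral_cong_AE)
    have "AE s in lborel. s \<notin> {1/2, 1}" by (intro AE_not_in countable_imp_null_set_lborel) auto
    then show "AE s in lborel. (f (cos (pi * s)^2) * ennreal (arcsine_density (cos (pi * s)^2) / 2)) *
        g' s * indicator {1/2..1} s = f (cos (pi * s)^2) * indicator {1/2..1} s"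
    proof eventually_elim
      case (elim s)
      show ?case
      proof (cases "s \<in> {1/2<..<1}")
        case True
        have "pi/2 < pi * s" "pi * s < pi" using True by auto
        then have "0 < cos (pi - pi * s)" by (intro cos_gt_zero) linarith+
        then have c: "cos (pi * s) < 0" by simp
        have sn: "sin (pi * s) > 0" using True by (intro sin_gt_zero) auto
        have "sqrt (cos (pi * s)^2 * (1 - cos (pi * s)^2)) = - cos (pi * s) * sin (pi * s)"
          using c sn
          by (simp add: sin_squared_eq[symmetric] real_sqrt_mult abs_mult flip: power_mult_distrib)
        then have "arcsine_density (cos (pi * s)^2) / 2 * g' s = 1"
          using c sn by (simp add: arcsine_density_def g'_def field_simps)
        then have "ennreal (arcsine_density (cos (pi * s)^2) / 2) * ennreal (g' s) = 1"
          using g'_nonneg[of s] True by (subst ennreal_mult''[symmetric]) auto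
        then show ?thesis using True by (simp add: mult.assoc)
      qed (use elim in \<open>auto simp: indicator_def\<close>)
    qed
  qed
  finally show ?thesis by simp
qed

lemma two_times_ennreal_half: "2 * ennreal (x / 2) = ennreal x"
proof (cases "x \<ge> 0")
  case True
  then have "ennreal x = ennreal (2 * (x/2))" by simp
  also have "\<dots> = 2 * ennreal (x/2)" by (subst ennreal_mult') auto
  finally show ?thesis by simp
qed (simp add: ennreal_neg)

text \<open>Both halves of \<open>[0,1]\<close> contribute equally since \<open>cos (\<pi>(1 - s)) = - cos (\<pi>s)\<close>;
  on the upper half, \<open>cos\<^sup>2 (\<pi>s)\<close> is increasing.\<close>
lemma nn_integral_cos_sq:
  fixes f :: "real \<Rightarrow> ennreal" assumes [measurable]: "f \<in> borel_measurable borel"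
  shows "(\<integral>\<^sup>+s. f (cos (pi * s)^2) * indicator {0..1} s \<partial>lborel) = arcsine_nn_integral f"
proof -
  define F where "F s = f (cos (pi * s)^2)" for s
  have [measurable]: "F \<in> borel_measurable borel" unfolding F_def by measurable
  have reflect: "(\<integral>\<^sup>+s. F s * indicator {0..1/2} s \<partial>lborel) =
        (\<integral>\<^sup>+s. F s * indicator {1/2..1} s \<partial>lborel)"
  proof -
    have "(\<integral>\<^sup>+s. F s * indicator {1/2..1} s \<partial>lborel) =
       ennreal \<bar>-1\<bar> * (\<integral>\<^sup>+s. F (1 + (-1) * s) * indicator {1/2..1} (1 + (-1) * s) \<partial>lborel)"
      by (rule nn_integral_real_affine) auto
    also have "\<dots> = (\<integral>\<^sup>+s. F s * indicator {0..1/2} s \<partial>lborel)"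
    proof -
      have "F (1 + (-1) * s) = F s" for s by (simp add: F_def algebra_simps cos_diff)
      moreover have "indicator {1/2..1} (1 + (-1) * s) = (indicator {0..1/2} s :: ennreal)" for s :: real
        by (auto simp: indicator_def)
      ultimately show ?thesis by simp
    qed
    finally show ?thesis by simp
  qed
  have "(\<integral>\<^sup>+s. F s * indicator {0..1} s \<partial>lborel) =
        (\<integral>\<^sup>+s. F s * indicator {0..1/2} s + F s * indicator {1/2..1} s \<partial>lborel)"
  proof (rule nn_integral_cong_AE)
    have "AE s in lborel. s \<noteq> 1/2" by (rule AE_lborel_singleton)
    then show "AE s in lborel. F s * indicator {0..1} s =
       F s * indicator {0..1/2} s + F s * indicator {1/2..1} s"
      by eventually_elim (auto simp: indicator_def)
  qed
  also have "\<dots> = 2 * (\<integral>\<^sup>+s. F s * indicator {1/2..1} s \<partial>lborel)"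
    by (subst nn_integral_add) (auto simp: reflect mult_2)
  also have "\<dots> = (\<integral>\<^sup>+a. f a * (2 * ennreal (arcsine_density a / 2)) * indicator {0..1} a \<partial>lborel)"
    unfolding F_def nn_integral_cos_sq_upper_half[OF assms]
    by (subst nn_integral_cmult[symmetric]) (auto simp: ac_simps)
  finally show ?thesis unfolding F_def two_times_ennreal_half arcsine_nn_integral_def .
qed

section \<open>Moments of the arcsine law and Euler's integral\<close>

definition arcsine_moment :: "nat \<Rightarrow> real" where
  "arcsine_moment n = pochhammer (1/2) n / fact n"

lemma arcsine_moment_nonneg: "0 \<le> arcsine_moment n"
  unfolding arcsine_moment_def by (intro divide_nonneg_nonneg pochhammer_nonneg) auto

lemma pochhammer_half_le_fact: "pochhammer (1/2::real) n \<le> fact n"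
proof (induction n)
  case (Suc n)
  have "pochhammer (1/2::real) (Suc n) = pochhammer (1/2) n * (1/2 + real n)"
    by (simp add: pochhammer_Suc)
  also have "\<dots> \<le> fact n * (real n + 1)"
    using Suc by (intro mult_mono) (auto intro: pochhammer_nonneg)
  also have "\<dots> = fact (Suc n)" by (simp add: algebra_simps)
  finally show ?case .
qed simp

lemma arcsine_moment_le_one: "arcsine_moment n \<le> 1"
  unfolding arcsine_moment_def using pochhammer_half_le_fact[of n] by (simp add: divide_le_eq_1)

lemma hyp2F1_half_half_one_sums:
  assumes "0 \<le> z" "z < 1"
  shows "(\<lambda>n. (arcsine_moment n)^2 * z^n) sums hyp2F1 (1/2) (1/2) 1 z"
proof -
  have "summable (\<lambda>n. (arcsine_moment n)^2 * z^n)"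
  proof (rule summable_comparison_test'[OF summable_geometric[of z]])
    fix n :: nat
    have "(arcsine_moment n)^2 \<le> 1"
      using arcsine_moment_nonneg[of n] arcsine_moment_le_one[of n] by (simp add: power_le_one)
    then show "norm ((arcsine_moment n)^2 * z^n) \<le> z^n"
      using assms mult_right_mono[of _ 1 "z^n"] by simp
  qed (use assms in auto)
  moreover have "pochhammer (1/2) n * pochhammer (1/2) n / pochhammer 1 n * z^n / fact n =
      (arcsine_moment n)^2 * z^n" for n
    by (simp add: arcsine_moment_def pochhammer_fact[symmetric] power2_eq_square field_simps)
  ultimately show ?thesis unfolding hyp2F1_def by (simp add: summable_sums)
qed

lemma hyp2F1_half_half_one_nonneg:
  assumes "0 \<le> z" "z < 1" shows "0 \<le> hyp2F1 (1/2) (1/2) 1 z"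
proof -
  from hyp2F1_half_half_one_sums[OF assms]
  have "summable (\<lambda>n. (arcsine_moment n)^2 * z^n)"
    and "hyp2F1 (1/2) (1/2) 1 z = (\<Sum>n. (arcsine_moment n)^2 * z^n)"
    by (auto simp: sums_iff)
  then show ?thesis using assms by (simp add: suminf_nonneg)
qed

lemma hyp2F1_measurable [measurable]: "(\<lambda>z. hyp2F1 a b c z) \<in> borel_measurable borel"
  unfolding hyp2F1_def by measurable

lemma Beta_half_half: "Beta (1/2) (1/2) = pi"
  by (simp add: Beta_altdef Gamma_one_half_real)

lemma Beta_plus_half_half: "Beta (real n + 1/2) (1/2) = pi * arcsine_moment n"
proof (induction n)
  case 0
  then show ?case by (simp add: arcsine_moment_def Beta_half_half)
next
  case (Suc n)
  have "real n + 1/2 \<notin> \<int>\<^sub>\<le>\<^sub>0" by (auto dest: nonpos_Ints_nonpos)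
  from Beta_plus1_left[OF this, of "1/2"]
  have "(real n + 1) * Beta (real n + 1/2 + 1) (1/2) = (real n + 1/2) * Beta (real n + 1/2) (1/2)"
    by (simp add: algebra_simps)
  then have "Beta (real (Suc n) + 1/2) (1/2) = (real n + 1/2) * (pi * arcsine_moment n) / (real n + 1)"
    using Suc by (simp add: field_simps)
  also have "\<dots> = pi * arcsine_moment (Suc n)"
    by (simp add: arcsine_moment_def pochhammer_Suc field_simps)
  finally show ?case .
qed

lemma nn_integral_Beta:
  assumes "0 < a" "0 < b"
  shows "(\<integral>\<^sup>+t. ennreal (t powr (a - 1) * (1 - t) powr (b - 1)) * indicator {0..1} t \<partial>lborel)
           = ennreal (Beta a b)"
  using nn_integral_has_integral_lebesgue'[OF _ has_integral_Beta_real[OF assms]] by auto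

lemma arcsine_nn_integral_eq_nn_integral:
  assumes "\<And>a. 0 < a \<Longrightarrow> a < 1 \<Longrightarrow> f a * ennreal (arcsine_density a) = g a"
  shows "arcsine_nn_integral f = (\<integral>\<^sup>+a. g a * indicator {0..1} a \<partial>lborel)"
  unfolding arcsine_nn_integral_def
proof (rule nn_integral_cong_AE)
  have "AE a in lborel. a \<notin> {0, 1}" by (intro AE_not_in countable_imp_null_set_lborel) auto
  then show "AE a in lborel. f a * ennreal (arcsine_density a) * indicator {0..1} a = g a * indicator {0..1} a"
    by eventually_elim (auto simp: assms indicator_def)
qed

lemma arcsine_nn_integral_power:
  "arcsine_nn_integral (\<lambda>a. ennreal (a ^ n)) = ennreal (arcsine_moment n)"
proof -
  have "arcsine_nn_integral (\<lambda>a. ennreal (a ^ n)) = (\<integral>\<^sup>+a. ennreal (1 / pi) *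
      (ennreal (a powr (real n + 1/2 - 1) * (1 - a) powr (1/2 - 1)) * indicator {0..1} a) \<partial>lborel)"
  proof (subst arcsine_nn_integral_eq_nn_integral)
    fix a :: real assume a: "0 < a" "a < 1"
    then have eq: "a ^ n * arcsine_density a =
        1 / pi * (a powr (real n + 1/2 - 1) * (1 - a) powr (1/2 - 1))"
      by (simp add: arcsine_density_eq_powr powr_realpow[symmetric] powr_add[symmetric])
    have "ennreal (a ^ n) * ennreal (arcsine_density a) = ennreal (a ^ n * arcsine_density a)"
      using a by (simp add: ennreal_mult')
    also have "\<dots> = ennreal (1 / pi) * ennreal (a powr (real n + 1/2 - 1) * (1 - a) powr (1/2 - 1))"
      unfolding eq by (rule ennreal_mult') simp
    finally show "ennreal (a ^ n) * ennreal (arcsine_density a) =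
        ennreal (1 / pi) * ennreal (a powr (real n + 1/2 - 1) * (1 - a) powr (1/2 - 1))" .
  qed (simp add: mult.assoc)
  also have "\<dots> = ennreal (1 / pi) * (\<integral>\<^sup>+a. ennreal (a powr (real n + 1/2 - 1) *
      (1 - a) powr (1/2 - 1)) * indicator {0..1} a \<partial>lborel)"
    by (rule nn_integral_cmult) measurable
  also have "\<dots> = ennreal (1 / pi) * ennreal (Beta (real n + 1/2) (1/2))"
    by (subst nn_integral_Beta) auto
  also have "\<dots> = ennreal (1 / pi * (pi * arcsine_moment n))"
    by (subst ennreal_mult'[symmetric]) (simp_all add: Beta_plus_half_half)
  finally show ?thesis by simp
qed

lemma arcsine_nn_integral_cmult:
  assumes [measurable]: "f \<in> borel_measurable borel"
  shows "arcsine_nn_integral (\<lambda>a. c * f a) = c * arcsine_nn_integral f"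
  unfolding arcsine_nn_integral_def by (subst nn_integral_cmult[symmetric]) (auto simp: ac_simps)

lemma arcsine_nn_integral_const: "arcsine_nn_integral (\<lambda>_. c) = c"
  using arcsine_nn_integral_cmult[of "\<lambda>a. ennreal (a ^ 0)" c] arcsine_nn_integral_power[of 0]
  by (simp add: arcsine_moment_def)

lemma sums_one_minus_powr_minus_half:
  assumes "0 \<le> x" "x < 1"
  shows "(\<lambda>n. arcsine_moment n * x^n) sums (1 - x) powr (-1/2)"
proof -
  have "\<bar>-x\<bar> < 1" using assms by simp
  from gen_binomial_real[OF this, of "-1/2"]
  have "(\<lambda>n. ((-1/2) gchoose n) * (-x)^n) sums (1 - x) powr (-1/2)" by simp
  moreover have "((-1/2) gchoose n) * (-x)^n = arcsine_moment n * x^n" for n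
  proof -
    have "((-1/2::real) gchoose n) * (-x)^n = ((-1)^n * (-1)^n) * (pochhammer (1/2) n / fact n) * x^n"
      by (simp add: gbinomial_pochhammer power_minus[of x])
    also have "(-1::real)^n * (-1)^n = 1" by (simp flip: power_add)
    finally show ?thesis by (simp add: arcsine_moment_def)
  qed
  ultimately show ?thesis by simp
qed

text \<open>Euler's integral representation of \<open>\<^sub>2F\<^sub>1(1/2,1/2;1;z)\<close>: expand \<open>(1 - zy)\<^sup>-\<^sup>1\<^sup>/\<^sup>2\<close>
  binomially and integrate term by term.\<close>
lemma arcsine_nn_integral_one_minus_powr:
  assumes z: "0 \<le> z" "z < 1"
  shows "arcsine_nn_integral (\<lambda>y. ennreal ((1 - z * y) powr (-1/2))) =
           ennreal (hyp2F1 (1/2) (1/2) 1 z)"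
proof -
  have "arcsine_nn_integral (\<lambda>y. ennreal ((1 - z * y) powr (-1/2))) =
        arcsine_nn_integral (\<lambda>y. \<Sum>n. ennreal (arcsine_moment n * z^n) * ennreal (y^n))"
    unfolding arcsine_nn_integral_def
  proof (rule nn_integral_cong)
    fix y :: real
    show "ennreal ((1 - z * y) powr (-1/2)) * ennreal (arcsine_density y) * indicator {0..1} y =
        (\<Sum>n. ennreal (arcsine_moment n * z^n) * ennreal (y^n)) * ennreal (arcsine_density y) *
          indicator {0..1} y"
    proof (cases "y \<in> {0..<1}")
      case True
      then have "z * y < 1" using z mult_left_le[of y z] by auto
      then have "(\<lambda>n. arcsine_moment n * z^n * y^n) sums (1 - z * y) powr (-1/2)"
        using sums_one_minus_powr_minus_half[of "z * y"] z True by (simp add: power_mult_distrib mult_ac)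
      then have "(\<Sum>n. ennreal (arcsine_moment n * z^n * y^n)) = ennreal ((1 - z * y) powr (-1/2))"
        using True z arcsine_moment_nonneg by (intro suminf_ennreal_eq) auto
      then show ?thesis using True z arcsine_moment_nonneg by (simp add: ennreal_mult')
    next
      case False
      then show ?thesis by (cases "y = 1") (auto simp: arcsine_density_def)
    qed
  qed
  also have "\<dots> = (\<Sum>n. ennreal (arcsine_moment n * z^n) * arcsine_nn_integral (\<lambda>y. ennreal (y^n)))"
  proof -
    define c where "c n = ennreal (arcsine_moment n * z^n)" for n
    define R where "R y = ennreal (arcsine_density y) * indicator {0..1} y" for y :: real
    have "(\<Sum>n. c n * (ennreal (y^n) * R y)) = (\<Sum>n. c n * ennreal (y^n)) * R y" for y
      by (simp only: mult.assoc[symmetric] ennreal_suminf_multc)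
    then have "arcsine_nn_integral (\<lambda>y. \<Sum>n. c n * ennreal (y^n)) =
        (\<integral>\<^sup>+y. (\<Sum>n. c n * (ennreal (y^n) * R y)) \<partial>lborel)"
      unfolding arcsine_nn_integral_def R_def by (simp only: mult.assoc)
    also have "\<dots> = (\<Sum>n. \<integral>\<^sup>+y. c n * (ennreal (y^n) * R y) \<partial>lborel)"
      by (rule nn_integral_suminf) (simp add: R_def)
    also have "\<dots> = (\<Sum>n. c n * arcsine_nn_integral (\<lambda>y. ennreal (y^n)))"
      unfolding arcsine_nn_integral_def R_def
      by (intro suminf_cong, subst nn_integral_cmult[symmetric]) (auto simp: mult.assoc)
    finally show ?thesis unfolding c_def .
  qed
  also have "\<dots> = (\<Sum>n. ennreal ((arcsine_moment n)^2 * z^n))"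
    using z arcsine_moment_nonneg
    by (simp add: arcsine_nn_integral_power power2_eq_square mult_ac flip: ennreal_mult)
  also have "\<dots> = ennreal (hyp2F1 (1/2) (1/2) 1 z)"
    using z by (intro suminf_ennreal_eq hyp2F1_half_half_one_sums) auto
  finally show ?thesis .
qed

section \<open>The law of the product of two arcsine variables\<close>

lemma arcsine_density_product_substitution:
  fixes g y :: real
  assumes g: "0 < g" "g < 1" and y: "0 < y" "y < 1"
  defines "z \<equiv> 1 - g"
  defines "a \<equiv> 1 - z * y"
  shows "z * (arcsine_density a * arcsine_density (g / a) / a) =
           1 / (pi * sqrt g) * ((1 - z * y) powr (-1/2) * arcsine_density y)"
proof -
  have z: "0 < z" "z < 1" using g by (auto simp: z_def)
  have "z * y < 1 * 1" using z y by (intro mult_strict_mono) auto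
  then have a: "0 < a" using z y by (auto simp: a_def)
  have "g / a * (1 - g / a) = g * (z * (1 - y)) / a^2"
    using a by (simp add: a_def z_def field_simps power2_eq_square)
  then have "arcsine_density (g / a) = a / (pi * (sqrt g * sqrt z * sqrt (1 - y)))"
    using a by (simp add: arcsine_density_def real_sqrt_mult real_sqrt_divide)
  moreover have "arcsine_density a = 1 / (pi * (sqrt a * sqrt z * sqrt y))"
    by (simp add: arcsine_density_def a_def real_sqrt_mult)
  ultimately have "z * (arcsine_density a * arcsine_density (g / a) / a) =
      (sqrt z)^2 * (1 / (pi * (sqrt a * sqrt z * sqrt y)) *
        (a / (pi * (sqrt g * sqrt z * sqrt (1 - y)))) / a)"
    using z by simp
  also have "\<dots> = 1 / (pi * sqrt g) * (1 / sqrt a * (1 / (pi * (sqrt y * sqrt (1 - y)))))"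
    using z a y g by (simp add: field_simps power2_eq_square)
  also have "1 / sqrt a = (1 - z * y) powr (-1/2)"
    using a by (simp add: a_def powr_minus_divide powr_half_sqrt[symmetric] powr_minus)
  also have "1 / (pi * (sqrt y * sqrt (1 - y))) = arcsine_density y"
    by (simp add: arcsine_density_def real_sqrt_mult)
  finally show ?thesis .
qed

text \<open>For \<open>0 < g < 1\<close>, the density at \<open>g\<close> of the product of two independent
  arcsine variables; the substitution \<open>a = 1 - (1 - g) y\<close> reduces it to Euler's integral.\<close>
lemma nn_integral_arcsine_product_density:
  fixes g :: real assumes g: "0 < g" "g < 1"
  shows "(\<integral>\<^sup>+a. ennreal (arcsine_density a * arcsine_density (g / a) / a) * indicator {g..1} a \<partial>lborel) =
         ennreal (hyp2F1 (1/2) (1/2) 1 (1 - g) / (pi * sqrt g))"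
proof -
  define z where "z = 1 - g"
  have z: "0 < z" "z < 1" using g by (auto simp: z_def)
  define K where "K a = arcsine_density a * arcsine_density (g / a) / a" for a
  have [measurable]: "K \<in> borel_measurable borel" unfolding K_def by measurable
  define C where "C = 1 / (pi * sqrt g)"
  have C: "C \<ge> 0" unfolding C_def using g by simp
  have ind: "indicator {g..1} (1 + (-z) * y) = (indicator {0..1} y :: ennreal)" for y
  proof -
    have "g \<le> 1 + (-z) * y \<longleftrightarrow> z * y \<le> z * 1" by (simp add: z_def algebra_simps)
    then have "g \<le> 1 + (-z) * y \<longleftrightarrow> y \<le> 1" using z by simp
    moreover have "1 + (-z) * y \<le> 1 \<longleftrightarrow> 0 \<le> y" using z by (simp add: zero_le_mult_iff)
    ultimately have "1 + (-z) * y \<in> {g..1} \<longleftrightarrow> y \<in> {0..1}" by auto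
    then show ?thesis by (simp only: indicator_def)
  qed
  have "(\<integral>\<^sup>+a. ennreal (K a) * indicator {g..1} a \<partial>lborel) =
        ennreal \<bar>-z\<bar> * (\<integral>\<^sup>+y. ennreal (K (1 + (-z) * y)) * indicator {g..1} (1 + (-z) * y) \<partial>lborel)"
    by (rule nn_integral_real_affine) (use z in \<open>auto simp: K_def\<close>)
  also have "\<dots> = (\<integral>\<^sup>+y. ennreal (z * K (1 - z * y)) * indicator {0..1} y \<partial>lborel)"
    unfolding ind using z
    by (subst nn_integral_cmult[symmetric]) (auto simp: ennreal_mult' mult.assoc)
  also have "\<dots> = arcsine_nn_integral (\<lambda>y. ennreal C * ennreal ((1 - z * y) powr (-1/2)))"
  proof (subst arcsine_nn_integral_eq_nn_integral)
    fix y :: real assume y: "0 < y" "y < 1"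
    have "z * K (1 - z * y) = C * (1 - z * y) powr (-1/2) * arcsine_density y"
      using arcsine_density_product_substitution[OF g y] unfolding K_def C_def z_def by simp
    then show "ennreal C * ennreal ((1 - z * y) powr (-1/2)) * ennreal (arcsine_density y) =
        ennreal (z * K (1 - z * y))"
      using C by (simp add: ennreal_mult')
  qed simp
  also have "\<dots> = ennreal C * ennreal (hyp2F1 (1/2) (1/2) 1 z)"
    using z arcsine_nn_integral_one_minus_powr[of z] by (simp add: arcsine_nn_integral_cmult)
  finally show ?thesis
    using C by (simp add: K_def C_def z_def ennreal_mult'[symmetric])
qed

lemma arcsine_nn_integral_scale:
  fixes \<phi> :: "real \<Rightarrow> ennreal" and a :: real
  assumes [measurable]: "\<phi> \<in> borel_measurable borel" and a: "0 < a"
  shows "arcsine_nn_integral (\<lambda>b. \<phi> (a * b)) =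
         (\<integral>\<^sup>+g. \<phi> g * ennreal (arcsine_density (g / a) / a) * indicator {0..a} g \<partial>lborel)"
proof -
  have "(\<integral>\<^sup>+g. \<phi> g * ennreal (arcsine_density (g / a) / a) * indicator {0..a} g \<partial>lborel) =
    ennreal \<bar>a\<bar> * (\<integral>\<^sup>+b. \<phi> (0 + a * b) * ennreal (arcsine_density ((0 + a * b) / a) / a) *
      indicator {0..a} (0 + a * b) \<partial>lborel)"
    by (rule nn_integral_real_affine) (use a in auto)
  also have "\<dots> = (\<integral>\<^sup>+b. ennreal a * (\<phi> (a * b) * ennreal (arcsine_density b / a) *
      indicator {0..a} (a * b)) \<partial>lborel)"
    using a by (subst nn_integral_cmult) auto
  also have "\<dots> = arcsine_nn_integral (\<lambda>b. \<phi> (a * b))"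
    unfolding arcsine_nn_integral_def
  proof (intro nn_integral_cong)
    fix b :: real
    have "indicator {0..a} (a * b) = (indicator {0..1} b :: ennreal)"
      using a by (auto simp: indicator_def mult_le_cancel_left1 zero_le_mult_iff)
    moreover have "ennreal a * ennreal (arcsine_density b / a) = ennreal (arcsine_density b)"
      if "b \<in> {0..1}"
      using a arcsine_density_nonneg[of b] that by (simp flip: ennreal_mult')
    ultimately show "ennreal a * (\<phi> (a * b) * ennreal (arcsine_density b / a) * indicator {0..a} (a * b)) =
        \<phi> (a * b) * ennreal (arcsine_density b) * indicator {0..1} b"
      by (cases "b \<in> {0..1}") (simp_all add: mult.left_commute[of "ennreal a"])
  qed
  finally show ?thesis by simp
qed

lemma arcsine_joint_density_swap:
  fixes c :: ennreal
  shows "c * ennreal (arcsine_density (g / a) / a) * indicator {0..a} g *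
      (ennreal (arcsine_density a) * indicator {0..1} a) =
    c * indicator {0..1} g * (ennreal (arcsine_density a * arcsine_density (g / a) / a) * indicator {g..1} a)"
proof (cases "0 \<le> g \<and> g \<le> a \<and> a \<le> 1")
  case True
  then have "0 \<le> arcsine_density (g / a) / a"
    by (cases "a = 0") (auto intro!: divide_nonneg_nonneg arcsine_density_nonneg)
  then have "ennreal (arcsine_density a * (arcsine_density (g / a) / a)) =
      ennreal (arcsine_density a) * ennreal (arcsine_density (g / a) / a)"
    by (rule ennreal_mult'')
  then show ?thesis using True by (simp add: ac_simps)
qed (auto simp: indicator_def)

lemma arcsine_nn_integral_product:
  fixes \<phi> :: "real \<Rightarrow> ennreal" assumes [measurable]: "\<phi> \<in> borel_measurable borel"
  shows "arcsine_nn_integral (\<lambda>a. arcsine_nn_integral (\<lambda>b. \<phi> (a * b))) =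
    (\<integral>\<^sup>+g. \<phi> g * ennreal (hyp2F1 (1/2) (1/2) 1 (1 - g) / (pi * sqrt g)) * indicator {0..1} g \<partial>lborel)"
proof -
  have [measurable]: "Measurable.pred (borel \<Otimes>\<^sub>M borel) (\<lambda>x::real\<times>real. snd x \<in> {0..fst x})"
    unfolding atLeastAtMost_iff by measurable
  have "arcsine_nn_integral (\<lambda>a. arcsine_nn_integral (\<lambda>b. \<phi> (a * b))) =
     (\<integral>\<^sup>+a. (\<integral>\<^sup>+g. \<phi> g * ennreal (arcsine_density (g / a) / a) * indicator {0..a} g \<partial>lborel) *
        (ennreal (arcsine_density a) * indicator {0..1} a) \<partial>lborel)"
    unfolding arcsine_nn_integral_def[of "\<lambda>a. arcsine_nn_integral (\<lambda>b. \<phi> (a * b))"]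
  proof (rule nn_integral_cong_AE)
    have "AE a in lborel. a \<noteq> 0" by (rule AE_lborel_singleton)
    then show "AE a in lborel. arcsine_nn_integral (\<lambda>b. \<phi> (a * b)) * ennreal (arcsine_density a) *
        indicator {0..1} a = (\<integral>\<^sup>+g. \<phi> g * ennreal (arcsine_density (g / a) / a) *
        indicator {0..a} g \<partial>lborel) * (ennreal (arcsine_density a) * indicator {0..1} a)"
      by eventually_elim (auto simp: arcsine_nn_integral_scale indicator_def)
  qed
  also have "\<dots> = (\<integral>\<^sup>+a. \<integral>\<^sup>+g. \<phi> g * ennreal (arcsine_density (g / a) / a) * indicator {0..a} g *
        (ennreal (arcsine_density a) * indicator {0..1} a) \<partial>lborel \<partial>lborel)"
    by (rule nn_integral_cong, rule nn_integral_multc[symmetric]) measurable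
  also have "\<dots> = (\<integral>\<^sup>+g. \<integral>\<^sup>+a. \<phi> g * ennreal (arcsine_density (g / a) / a) * indicator {0..a} g *
        (ennreal (arcsine_density a) * indicator {0..1} a) \<partial>lborel \<partial>lborel)"
    by (rule lborel_pair.Fubini'[symmetric]) measurable
  also have "\<dots> = (\<integral>\<^sup>+g. \<phi> g * indicator {0..1} g * (\<integral>\<^sup>+a. ennreal (arcsine_density a *
      arcsine_density (g / a) / a) * indicator {g..1} a \<partial>lborel) \<partial>lborel)"
    unfolding arcsine_joint_density_swap by (intro nn_integral_cong nn_integral_cmult) measurable
  also have "\<dots> = (\<integral>\<^sup>+g. \<phi> g * ennreal (hyp2F1 (1/2) (1/2) 1 (1 - g) / (pi * sqrt g)) *
      indicator {0..1} g \<partial>lborel)"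
  proof (rule nn_integral_cong_AE)
    have "AE g in lborel. g \<notin> {0, 1}" by (intro AE_not_in countable_imp_null_set_lborel) auto
    then show "AE g in lborel. \<phi> g * indicator {0..1} g * (\<integral>\<^sup>+a. ennreal (arcsine_density a *
        arcsine_density (g / a) / a) * indicator {g..1} a \<partial>lborel) =
        \<phi> g * ennreal (hyp2F1 (1/2) (1/2) 1 (1 - g) / (pi * sqrt g)) * indicator {0..1} g"
    proof eventually_elim
      case (elim g)
      show ?case
      proof (cases "g \<in> {0..1}")
        case True
        then have "0 < g" "g < 1" using elim by auto
        then show ?thesis using True by (simp add: nn_integral_arcsine_product_density)
      qed simp
    qed
  qed
  finally show ?thesis .
qed

section \<open>The mean of \<open>ln (2\<surd>a)\<close> vanishes\<close>

lemma arcsine_nn_integral_mono: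
  "(\<And>a. 0 \<le> a \<Longrightarrow> a \<le> 1 \<Longrightarrow> f a \<le> g a) \<Longrightarrow> arcsine_nn_integral f \<le> arcsine_nn_integral g"
  unfolding arcsine_nn_integral_def
  by (intro nn_integral_mono) (auto simp: indicator_def intro: mult_right_mono)

lemma arcsine_nn_integral_measurable [measurable]:
  assumes [measurable]: "case_prod F \<in> borel_measurable (borel \<Otimes>\<^sub>M borel)"
  shows "(\<lambda>a. arcsine_nn_integral (F a)) \<in> borel_measurable borel"
  unfolding arcsine_nn_integral_def by measurable

lemma nn_integral_abs_sin:
  assumes [measurable]: "\<phi> \<in> borel_measurable borel"
  shows "(\<integral>\<^sup>+s. ennreal (\<phi> (2 * \<bar>sin (pi * s)\<bar>)) * indicator {0..1} s \<partial>lborel) =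
         arcsine_nn_integral (\<lambda>a. ennreal (\<phi> (2 * sqrt a)))"
proof -
  have "(\<integral>\<^sup>+s. ennreal (\<phi> (2 * \<bar>sin (pi * s)\<bar>)) * indicator {0..1} s \<partial>lborel) =
        arcsine_nn_integral (\<lambda>a. ennreal (\<phi> (2 * sqrt (1 - a))))"
    using nn_integral_cos_sq[of "\<lambda>a. ennreal (\<phi> (2 * sqrt (1 - a)))"]
    by (simp add: sin_squared_eq[symmetric])
  also have "\<dots> = ennreal \<bar>-1\<bar> * (\<integral>\<^sup>+a. ennreal (\<phi> (2 * sqrt (1 - (1 + (-1) * a)))) *
      ennreal (arcsine_density (1 + (-1) * a)) * indicator {0..1} (1 + (-1) * a) \<partial>lborel)"
    unfolding arcsine_nn_integral_def by (rule nn_integral_real_affine) auto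
  also have "\<dots> = arcsine_nn_integral (\<lambda>a. ennreal (\<phi> (2 * sqrt a)))"
    unfolding arcsine_nn_integral_def
    by (auto intro!: nn_integral_cong simp: arcsine_density_one_minus indicator_def)
  finally show ?thesis .
qed

lemma nn_integral_half_interval:
  fixes f :: "real \<Rightarrow> ennreal" assumes [measurable]: "f \<in> borel_measurable borel"
  shows "(\<integral>\<^sup>+s. f (t + 1/2 * s) * indicator {0..1} s \<partial>lborel) =
         2 * (\<integral>\<^sup>+u. f u * indicator {t..t + 1/2} u \<partial>lborel)"
proof -
  have "(\<integral>\<^sup>+u. f u * indicator {t..t + 1/2} u \<partial>lborel) =
     ennreal \<bar>1/2\<bar> * (\<integral>\<^sup>+s. f (t + 1/2 * s) * indicator {t..t + 1/2} (t + 1/2 * s) \<partial>lborel)"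
    by (rule nn_integral_real_affine) auto
  also have "(\<lambda>s. indicator {t..t + 1/2} (t + 1/2 * s)) = (indicator {0..1} :: real \<Rightarrow> ennreal)"
    by (auto simp: indicator_def fun_eq_iff)
  finally have "2 * (\<integral>\<^sup>+u. f u * indicator {t..t + 1/2} u \<partial>lborel) =
     (2 * ennreal (1/2)) * (\<integral>\<^sup>+s. f (t + 1/2 * s) * indicator {0..1} s \<partial>lborel)"
    by (simp add: mult.assoc)
  then show ?thesis using two_times_ennreal_half[of 1] by simp
qed

text \<open>The substitution \<open>s \<mapsto> s/2\<close> and \<open>s \<mapsto> (1 + s)/2\<close> covers \<open>[0,1]\<close> twice, and
  \<open>sin (\<pi>(1 + s)/2) = cos (\<pi>s/2)\<close>.\<close>
lemma nn_integral_abs_sin_cos_half: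
  assumes [measurable]: "\<phi> \<in> borel_measurable borel"
  shows "(\<integral>\<^sup>+s. (ennreal (\<phi> (2 * \<bar>sin (pi * s / 2)\<bar>)) + ennreal (\<phi> (2 * \<bar>cos (pi * s / 2)\<bar>))) *
            indicator {0..1} s \<partial>lborel) = 2 * arcsine_nn_integral (\<lambda>a. ennreal (\<phi> (2 * sqrt a)))"
proof -
  define F where "F u = ennreal (\<phi> (2 * \<bar>sin (pi * u)\<bar>))" for u
  have [measurable]: "F \<in> borel_measurable borel" unfolding F_def by measurable
  have "sin (pi * (1/2 + 1/2 * s)) = cos (pi * s / 2)" for s
    by (simp add: algebra_simps sin_add)
  then have "(\<integral>\<^sup>+s. (ennreal (\<phi> (2 * \<bar>sin (pi * s / 2)\<bar>)) + ennreal (\<phi> (2 * \<bar>cos (pi * s / 2)\<bar>))) *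
            indicator {0..1} s \<partial>lborel) =
      (\<integral>\<^sup>+s. F (0 + 1/2 * s) * indicator {0..1} s + F (1/2 + 1/2 * s) * indicator {0..1} s \<partial>lborel)"
    by (simp add: F_def distrib_right)
  also have "\<dots> = (\<integral>\<^sup>+s. F (0 + 1/2 * s) * indicator {0..1} s \<partial>lborel) +
      (\<integral>\<^sup>+s. F (1/2 + 1/2 * s) * indicator {0..1} s \<partial>lborel)"
    by (rule nn_integral_add) auto
  also have "\<dots> = 2 * (\<integral>\<^sup>+u. F u * indicator {0..0 + 1/2} u \<partial>lborel) +
      2 * (\<integral>\<^sup>+u. F u * indicator {1/2..1/2 + 1/2} u \<partial>lborel)"
    by (simp only: nn_integral_half_interval[OF \<open>F \<in> borel_measurable borel\<close>])
  also have "\<dots> = 2 * (\<integral>\<^sup>+u. F u * indicator {0..1/2} u + F u * indicator {1/2..1} u \<partial>lborel)"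
    by (simp add: nn_integral_add distrib_left)
  also have "(\<integral>\<^sup>+u. F u * indicator {0..1/2} u + F u * indicator {1/2..1} u \<partial>lborel) =
      (\<integral>\<^sup>+u. F u * indicator {0..1} u \<partial>lborel)"
  proof (rule nn_integral_cong_AE)
    have "AE s in lborel. s \<noteq> 1/2" by (rule AE_lborel_singleton)
    then show "AE u in lborel. F u * indicator {0..1/2} u + F u * indicator {1/2..1} u =
        F u * indicator {0..1} u"
      by eventually_elim (auto simp: indicator_def)
  qed
  finally show ?thesis unfolding F_def nn_integral_abs_sin[OF assms] .
qed

lemma abs_sin_duplication:
  assumes s: "0 < s" "s < 1"
  shows "2 * \<bar>sin (pi * s)\<bar> = (2 * \<bar>sin (pi * s / 2)\<bar>) * (2 * \<bar>cos (pi * s / 2)\<bar>)"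
    and "0 < 2 * \<bar>sin (pi * s / 2)\<bar>" and "0 < 2 * \<bar>cos (pi * s / 2)\<bar>"
proof -
  show "2 * \<bar>sin (pi * s)\<bar> = (2 * \<bar>sin (pi * s / 2)\<bar>) * (2 * \<bar>cos (pi * s / 2)\<bar>)"
    using sin_double[of "pi * s / 2"] by (simp add: abs_mult)
  show "0 < 2 * \<bar>sin (pi * s / 2)\<bar>" using s sin_gt_zero[of "pi * s / 2"] by simp
  show "0 < 2 * \<bar>cos (pi * s / 2)\<bar>" using s cos_gt_zero[of "pi * s / 2"] by simp
qed

lemma arcsine_nn_integral_ln_plus_finite:
  "arcsine_nn_integral (\<lambda>a. ennreal (ln_plus (2 * sqrt a))) < \<infinity>"
proof -
  have "arcsine_nn_integral (\<lambda>a. ennreal (ln_plus (2 * sqrt a))) \<le> arcsine_nn_integral (\<lambda>_. ennreal (ln 2))"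
    by (intro arcsine_nn_integral_mono ennreal_leI) (auto simp: ln_plus_def)
  then show ?thesis by (simp add: arcsine_nn_integral_const order.strict_trans1)
qed

lemma ln_minus_two_sqrt_le: "0 < a \<Longrightarrow> ln_minus (2 * sqrt a) \<le> 2 * a powr (-1/4)"
proof -
  assume a: "0 < a"
  have "ln (a powr (-1/4)) \<le> a powr (-1/4) - 1" using a by (intro ln_le_minus_one) simp
  then have "- ln a / 2 \<le> 2 * a powr (-1/4)" using a by (simp add: ln_powr)
  moreover have "- ln (2 * sqrt a) \<le> - ln a / 2" using a by (simp add: ln_mult ln_sqrt)
  ultimately show ?thesis by (auto simp: ln_minus_def min_def)
qed

lemma arcsine_nn_integral_ln_minus_finite:
  "arcsine_nn_integral (\<lambda>a. ennreal (ln_minus (2 * sqrt a))) < \<infinity>"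
proof -
  have "arcsine_nn_integral (\<lambda>a. ennreal (ln_minus (2 * sqrt a))) \<le>
      (\<integral>\<^sup>+a. ennreal (2 / pi) * (ennreal (a powr (1/4 - 1) * (1 - a) powr (1/2 - 1)) *
        indicator {0..1} a) \<partial>lborel)"
    unfolding arcsine_nn_integral_def
  proof (rule nn_integral_mono_AE)
    have "AE y in lborel. y \<notin> {0, 1}" by (intro AE_not_in countable_imp_null_set_lborel) auto
    then show "AE a in lborel. ennreal (ln_minus (2 * sqrt a)) * ennreal (arcsine_density a) *
        indicator {0..1} a \<le> ennreal (2 / pi) * (ennreal (a powr (1/4 - 1) * (1 - a) powr (1/2 - 1)) *
        indicator {0..1} a)"
    proof eventually_elim
      case (elim a)
      show ?case
      proof (cases "a \<in> {0..1}")
        case True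
        then have a: "0 < a" "a < 1" using elim by auto
        have "ln_minus (2 * sqrt a) * arcsine_density a \<le> (2 * a powr (-1/4)) * arcsine_density a"
          using ln_minus_two_sqrt_le[OF a(1)] a by (intro mult_right_mono arcsine_density_nonneg) auto
        also have "\<dots> = 2 / pi * (a powr (1/4 - 1) * (1 - a) powr (1/2 - 1))"
          using a by (simp add: arcsine_density_eq_powr powr_add[symmetric])
        finally show ?thesis
          using True a ln_minus_nonneg[of "2 * sqrt a"]
          by (simp add: ennreal_mult'[symmetric] ennreal_leI del: ennreal_mult)
      qed simp
    qed
  qed
  also have "\<dots> = ennreal (2 / pi) * (\<integral>\<^sup>+a. ennreal (a powr (1/4 - 1) * (1 - a) powr (1/2 - 1)) *
      indicator {0..1} a \<partial>lborel)"
    by (rule nn_integral_cmult) measurable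
  also have "\<dots> = ennreal (2 / pi) * ennreal (Beta (1/4) (1/2))"
    by (subst nn_integral_Beta) auto
  also have "\<dots> < \<infinity>" by (simp flip: ennreal_mult')
  finally show ?thesis .
qed

lemma ennreal_add_double_cancel:
  fixes x y :: ennreal
  assumes "x + 2 * y = y + 2 * x" "x < \<infinity>" "y < \<infinity>"
  shows "x = y"
proof -
  obtain p where p: "x = ennreal p" "0 \<le> p" using assms(2) by (cases x) auto
  obtain m where m: "y = ennreal m" "0 \<le> m" using assms(3) by (cases y) auto
  have "ennreal (p + 2 * m) = ennreal (m + 2 * p)"
    using assms(1) p m by (simp add: ennreal_plus ennreal_mult')
  then have "p + 2 * m = m + 2 * p" using p m by (subst (asm) ennreal_inj) auto
  then show ?thesis using p m by simp
qed

text \<open>The duplication formula turns the expectation \<open>E\<close> of \<open>ln\<^sup>+ (2\<surd>a) + 2 ln\<^sup>- (2\<surd>a)\<close> into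
  that of \<open>ln\<^sup>- (2\<surd>a) + 2 ln\<^sup>+ (2\<surd>a)\<close>; both are finite, so they cancel.\<close>
lemma arcsine_nn_integral_ln_plus_eq_ln_minus:
  "arcsine_nn_integral (\<lambda>a. ennreal (ln_plus (2 * sqrt a))) =
   arcsine_nn_integral (\<lambda>a. ennreal (ln_minus (2 * sqrt a)))"
  (is "?P = ?M")
proof -
  define S where "S s = 2 * \<bar>sin (pi * s)\<bar>" for s :: real
  define S1 where "S1 s = 2 * \<bar>sin (pi * s / 2)\<bar>" for s :: real
  define S2 where "S2 s = 2 * \<bar>cos (pi * s / 2)\<bar>" for s :: real
  have split: "(\<integral>\<^sup>+s. (ennreal (\<phi> (S s)) + (ennreal (\<psi> (S1 s)) + ennreal (\<psi> (S2 s)))) *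
        indicator {0..1} s \<partial>lborel) =
      arcsine_nn_integral (\<lambda>a. ennreal (\<phi> (2 * sqrt a))) +
        2 * arcsine_nn_integral (\<lambda>a. ennreal (\<psi> (2 * sqrt a)))"
    if [measurable]: "\<phi> \<in> borel_measurable borel" "\<psi> \<in> borel_measurable borel" for \<phi> \<psi>
    unfolding S_def S1_def S2_def
    by (subst distrib_right, subst nn_integral_add)
      (auto simp: nn_integral_abs_sin nn_integral_abs_sin_cos_half)
  have "?P + 2 * ?M = (\<integral>\<^sup>+s. (ennreal (ln_plus (S s)) + (ennreal (ln_minus (S1 s)) +
      ennreal (ln_minus (S2 s)))) * indicator {0..1} s \<partial>lborel)"
    by (simp add: split)
  also have "\<dots> = (\<integral>\<^sup>+s. (ennreal (ln_minus (S s)) + (ennreal (ln_plus (S1 s)) +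
      ennreal (ln_plus (S2 s)))) * indicator {0..1} s \<partial>lborel)"
  proof (rule nn_integral_cong_AE)
    have "AE y in lborel. y \<notin> {0, 1}" by (intro AE_not_in countable_imp_null_set_lborel) auto
    then show "AE s in lborel. (ennreal (ln_plus (S s)) + (ennreal (ln_minus (S1 s)) +
        ennreal (ln_minus (S2 s)))) * indicator {0..1} s = (ennreal (ln_minus (S s)) +
        (ennreal (ln_plus (S1 s)) + ennreal (ln_plus (S2 s)))) * indicator {0..1} s"
    proof eventually_elim
      case (elim s)
      show ?case
      proof (cases "s \<in> {0..1}")
        case True
        then have "0 < s" "s < 1" using elim by auto
        from abs_sin_duplication[OF this] have "S s = S1 s * S2 s" "0 < S1 s" "0 < S2 s"
          unfolding S_def S1_def S2_def by blast+
        then show ?thesis using ennreal_ln_plus_mult[of "S1 s" "S2 s"] by simp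
      qed simp
    qed
  qed
  also have "\<dots> = ?M + 2 * ?P" by (simp add: split)
  finally show ?thesis
    using arcsine_nn_integral_ln_plus_finite arcsine_nn_integral_ln_minus_finite
    by (rule ennreal_add_double_cancel)
qed

section \<open>From \<open>ln\<^sup>+\<close> to \<open>ln\<^sup>-\<close>, and the substitution \<open>g = x\<^sup>2/16\<close>\<close>

lemma arcsine_nn_integral_cong:
  "(\<And>a. 0 < a \<Longrightarrow> a < 1 \<Longrightarrow> f a = g a) \<Longrightarrow> arcsine_nn_integral f = arcsine_nn_integral g"
  by (subst arcsine_nn_integral_eq_nn_integral[where g = "\<lambda>a. g a * ennreal (arcsine_density a)"])
    (simp_all add: arcsine_nn_integral_def)

lemma arcsine_nn_integral2_add:
  assumes [measurable]: "case_prod F \<in> borel_measurable (lborel \<Otimes>\<^sub>M lborel)"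
    "case_prod G \<in> borel_measurable (lborel \<Otimes>\<^sub>M lborel)"
  shows "arcsine_nn_integral (\<lambda>a. arcsine_nn_integral (\<lambda>b. F a b + G a b)) =
    arcsine_nn_integral (\<lambda>a. arcsine_nn_integral (F a)) + arcsine_nn_integral (\<lambda>a. arcsine_nn_integral (G a))"
  unfolding arcsine_nn_integral_def by (simp add: distrib_right nn_integral_add)

lemma arcsine_nn_integral2_ln_plus_eq_ln_minus:
  "arcsine_nn_integral (\<lambda>a. arcsine_nn_integral (\<lambda>b. ennreal (ln_plus (4 * sqrt (a * b))))) =
   arcsine_nn_integral (\<lambda>a. arcsine_nn_integral (\<lambda>b. ennreal (ln_minus (4 * sqrt (a * b)))))"
proof -
  define P where "P a = ennreal (ln_plus (2 * sqrt a))" for a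
  define M where "M a = ennreal (ln_minus (2 * sqrt a))" for a
  have [measurable]: "P \<in> borel_measurable borel" "M \<in> borel_measurable borel"
    unfolding P_def M_def by measurable
  have prod: "ennreal (ln_plus (4 * sqrt (a * b))) + (M a + M b) =
      ennreal (ln_minus (4 * sqrt (a * b))) + (P a + P b)" if "0 < a" "0 < b" for a b
  proof -
    have "4 * sqrt (a * b) = 2 * sqrt a * (2 * sqrt b)" by (simp add: real_sqrt_mult)
    then show ?thesis using that ennreal_ln_plus_mult[of "2 * sqrt a" "2 * sqrt b"]
      by (simp add: P_def M_def)
  qed
  have "arcsine_nn_integral (\<lambda>a. arcsine_nn_integral (\<lambda>b. ennreal (ln_plus (4 * sqrt (a * b))))) +
      (arcsine_nn_integral M + arcsine_nn_integral M) =
    arcsine_nn_integral (\<lambda>a. arcsine_nn_integral (\<lambda>b. ennreal (ln_plus (4 * sqrt (a * b))) + (M a + M b)))"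
    by (simp add: arcsine_nn_integral2_add arcsine_nn_integral_const)
  also have "\<dots> = arcsine_nn_integral
      (\<lambda>a. arcsine_nn_integral (\<lambda>b. ennreal (ln_minus (4 * sqrt (a * b))) + (P a + P b)))"
    by (intro arcsine_nn_integral_cong) (simp add: prod)
  also have "\<dots> = arcsine_nn_integral (\<lambda>a. arcsine_nn_integral (\<lambda>b. ennreal (ln_minus (4 * sqrt (a * b))))) +
      (arcsine_nn_integral P + arcsine_nn_integral P)"
    by (simp add: arcsine_nn_integral2_add arcsine_nn_integral_const)
  finally show ?thesis
    using arcsine_nn_integral_ln_plus_eq_ln_minus arcsine_nn_integral_ln_minus_finite
    unfolding P_def M_def by (auto simp: ennreal_add_eq_top)
qed

lemma ln_minus_four_sqrt_eq_zero: "1/16 \<le> g \<Longrightarrow> ln_minus (4 * sqrt g) = 0"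
proof -
  assume "1/16 \<le> g"
  then have "sqrt (1/16) \<le> sqrt g" by (rule real_sqrt_le_mono)
  moreover have "sqrt (1/16::real) = 1/4" by (simp add: real_sqrt_divide)
  ultimately show ?thesis by (simp add: ln_minus_def)
qed

text \<open>The substitution \<open>g = x\<^sup>2/16\<close>, which maps \<open>[0,1]\<close> onto the support \<open>[0, 1/16]\<close>
  of \<open>ln\<^sup>- (4\<surd>g)\<close>.\<close>
lemma nn_integral_ln_minus_product_density:
  "(\<integral>\<^sup>+g. ennreal (ln_minus (4 * sqrt g)) * ennreal (hyp2F1 (1/2) (1/2) 1 (1 - g) / (pi * sqrt g)) *
      indicator {0..1} g \<partial>lborel) =
   ennreal (1 / (2 * pi)) *
     (\<integral>\<^sup>+x. ennreal (indicator {0..1} x * - (hyp2F1 (1/2) (1/2) 1 (1 - x^2/16) * ln x)) \<partial>lborel)"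
proof -
  define F where "F g = ennreal (ln_minus (4 * sqrt g)) * ennreal (hyp2F1 (1/2) (1/2) 1 (1 - g) / (pi * sqrt g))"
    for g
  have "(\<integral>\<^sup>+g. F g * indicator {0..1} g \<partial>lborel) =
      (\<integral>\<^sup>+g. F g * indicator {(0::real)^2/16..1^2/16} g \<partial>lborel)"
    by (intro nn_integral_cong) (auto simp: F_def indicator_def ln_minus_four_sqrt_eq_zero)
  also have "\<dots> = (\<integral>\<^sup>+x. F (x^2/16) * (x / 8) * indicator {0..1} x \<partial>lborel)"
    by (rule nn_integral_substitution_aux)
      (auto simp: F_def intro!: derivative_eq_intros continuous_intros)
  also have "\<dots> = (\<integral>\<^sup>+x. ennreal (1 / (2 * pi)) *
      ennreal (indicator {0..1} x * - (hyp2F1 (1/2) (1/2) 1 (1 - x^2/16) * ln x)) \<partial>lborel)"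
  proof (rule nn_integral_cong_AE)
    have "AE x in lborel. x \<noteq> 0" by (rule AE_lborel_singleton)
    then show "AE x in lborel. F (x^2/16) * ennreal (x / 8) * indicator {0..1} x = ennreal (1 / (2 * pi)) *
        ennreal (indicator {0..1} x * - (hyp2F1 (1/2) (1/2) 1 (1 - x^2/16) * ln x))"
    proof eventually_elim
      case (elim x)
      show ?case
      proof (cases "x \<in> {0..1}")
        case True
        then have x: "0 < x" "x \<le> 1" using elim by auto
        define h where "h = hyp2F1 (1/2) (1/2) 1 (1 - x^2/16)"
        have "x^2 \<le> 1" using x by (simp add: power_le_one)
        then have h: "0 \<le> h" unfolding h_def using x by (intro hyp2F1_half_half_one_nonneg) auto
        have sq: "sqrt (x^2/16) = x / 4" using x by (simp add: real_sqrt_divide)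
        have "ln_minus (4 * sqrt (x^2/16)) = - ln x" using x by (simp add: sq ln_minus_def)
        then have "F (x^2/16) * ennreal (x / 8) =
            ennreal (- ln x) * ennreal (h / (pi * (x / 4))) * ennreal (x / 8)"
          unfolding F_def sq h_def by simp
        also have "\<dots> = ennreal (- ln x * (h / (pi * (x / 4))) * (x / 8))"
        proof -
          have "0 \<le> - ln x" "0 \<le> h / (pi * (x / 4))" "0 \<le> x / 8" using x h by auto
          then show ?thesis by (simp only: ennreal_mult mult_nonneg_nonneg)
        qed
        also have "- ln x * (h / (pi * (x / 4))) * (x / 8) = 1 / (2 * pi) * - (h * ln x)"
          using x by (simp add: field_simps)
        also have "ennreal \<dots> = ennreal (1 / (2 * pi)) * ennreal (- (h * ln x))"
          by (rule ennreal_mult') simp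
        finally show ?thesis using True by (simp add: h_def)
      qed simp
    qed
  qed
  finally show ?thesis unfolding F_def by (simp add: nn_integral_cmult)
qed

lemma set_integral_hyp2F1_ln:
  "(LINT x : {0..1} | lborel. hyp2F1 (1/2) (1/2) 1 (1 - x\<^sup>2 / 16) * ln x) =
   - enn2real (\<integral>\<^sup>+x. ennreal (indicator {0..1} x * - (hyp2F1 (1/2) (1/2) 1 (1 - x^2/16) * ln x)) \<partial>lborel)"
proof -
  have "(LINT x : {0..1} | lborel. hyp2F1 (1/2) (1/2) 1 (1 - x\<^sup>2 / 16) * ln x) =
      - (\<integral>x. indicator {0..1} x * - (hyp2F1 (1/2) (1/2) 1 (1 - x^2/16) * ln x) \<partial>lborel)"
    unfolding set_lebesgue_integral_def by (simp flip: integral_minus)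
  also have "(\<integral>x. indicator {0..1} x * - (hyp2F1 (1/2) (1/2) 1 (1 - x^2/16) * ln x) \<partial>lborel) =
    enn2real (\<integral>\<^sup>+x. ennreal (indicator {0..1} x * - (hyp2F1 (1/2) (1/2) 1 (1 - x^2/16) * ln x)) \<partial>lborel)"
  proof (rule integral_eq_nn_integral)
    show "AE x in lborel. 0 \<le> indicator {0..1} x * - (hyp2F1 (1/2) (1/2) 1 (1 - x^2/16) * ln (x::real))"
    proof (rule AE_I2)
      fix x :: real
      show "0 \<le> indicator {0..1} x * - (hyp2F1 (1/2) (1/2) 1 (1 - x^2/16) * ln x)"
      proof (cases "x \<in> {0<..1}")
        case True
        then have "x^2 \<le> 1" by (simp add: power_le_one)
        then have "0 \<le> hyp2F1 (1/2) (1/2) 1 (1 - x^2/16)"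
          using True by (intro hyp2F1_half_half_one_nonneg) auto
        moreover have "ln x \<le> 0" using True by simp
        ultimately show ?thesis using True by (simp add: mult_nonneg_nonpos)
      qed (auto simp: indicator_def)
    qed
  qed measurable
  finally show ?thesis .
qed

section \<open>The Mahler measure as an arcsine expectation\<close>

lemma norm_one_plus_cis: "cmod (1 + cis (2*pi*t)) = 2 * \<bar>cos (pi * t)\<bar>"
proof -
  have "1 + cis (2*pi*t) = cis (pi*t) * complex_of_real (2 * cos (pi*t))"
    by (rule complex_eqI) (simp_all add: cos_double_cos power2_eq_square sin_double mult.assoc)
  then show ?thesis by (simp add: norm_mult)
qed

lemma finite_abs_cos_level: "finite {t \<in> {0..1::real}. \<bar>cos (pi * t)\<bar> = c}"
proof (rule finite_subset)
  show "{t \<in> {0..1::real}. \<bar>cos (pi * t)\<bar> = c} \<subseteq> {arccos c / pi, arccos (- c) / pi}"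
  proof
    fix t assume "t \<in> {t \<in> {0..1::real}. \<bar>cos (pi * t)\<bar> = c}"
    then have t: "0 \<le> t" "t \<le> 1" "\<bar>cos (pi * t)\<bar> = c" by auto
    have "arccos (cos (pi * t)) = pi * t" using t by (intro arccos_cos) auto
    then have "t = arccos (cos (pi * t)) / pi" by simp
    then show "t \<in> {arccos c / pi, arccos (- c) / pi}" using t(3) by (auto simp: abs_if)
  qed
qed simp

lemma AE_abs_cos_prod_ne:
  "AE y in (lborel :: (real \<times> real) measure).
     y \<in> {0..1} \<times> {0..1} \<longrightarrow> 4 * \<bar>cos (pi * fst y)\<bar> * \<bar>cos (pi * snd y)\<bar> \<noteq> 1"
  unfolding lborel_prod[symmetric]
proof (rule lborel_pair.AE_pair_measure[OF _ AE_I2])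
  fix s :: real
  show "AE t in lborel. (s, t) \<in> {0..1} \<times> {0..1} \<longrightarrow>
      4 * \<bar>cos (pi * fst (s, t))\<bar> * \<bar>cos (pi * snd (s, t))\<bar> \<noteq> 1"
  proof (cases "cos (pi * s) = 0")
    case False
    have "AE t in lborel. t \<notin> {t \<in> {0..1::real}. \<bar>cos (pi * t)\<bar> = 1 / (4 * \<bar>cos (pi * s)\<bar>)}"
      by (intro AE_not_in countable_imp_null_set_lborel countable_finite finite_abs_cos_level)
    then show ?thesis by eventually_elim (use False in \<open>auto simp: field_simps\<close>)
  qed simp
qed measurable

lemma nn_integral_unit_square_abs_cos:
  assumes [measurable]: "\<phi> \<in> borel_measurable borel"
  shows "(\<integral>\<^sup>+y. ennreal (indicator ({0..1} \<times> {0..1}) y *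
            \<phi> (4 * \<bar>cos (pi * fst y)\<bar> * \<bar>cos (pi * snd y)\<bar>)) \<partial>lborel) =
         arcsine_nn_integral (\<lambda>a. arcsine_nn_integral (\<lambda>b. ennreal (\<phi> (4 * sqrt (a * b)))))"
proof -
  have [measurable]: "{0..1::real} \<times> {0..1::real} \<in> sets (borel \<Otimes>\<^sub>M borel)"
    by (intro pair_measureI) auto
  have "(\<integral>\<^sup>+y. ennreal (indicator ({0..1} \<times> {0..1}) y *
            \<phi> (4 * \<bar>cos (pi * fst y)\<bar> * \<bar>cos (pi * snd y)\<bar>)) \<partial>lborel) =
      (\<integral>\<^sup>+s. (\<integral>\<^sup>+t. ennreal (\<phi> (4 * sqrt (cos (pi * s)^2 * cos (pi * t)^2))) *
        indicator {0..1} t \<partial>lborel) * indicator {0..1} s \<partial>lborel)"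
    unfolding lborel_prod[symmetric]
    by (subst lborel.nn_integral_fst[symmetric])
      (measurable, auto intro!: nn_integral_cong simp: real_sqrt_mult indicator_def mult.assoc)
  also have "\<dots> = arcsine_nn_integral (\<lambda>a. arcsine_nn_integral (\<lambda>b. ennreal (\<phi> (4 * sqrt (a * b)))))"
  proof -
    have "(\<integral>\<^sup>+t. ennreal (\<phi> (4 * sqrt (cos (pi * s)^2 * cos (pi * t)^2))) * indicator {0..1} t \<partial>lborel) =
        arcsine_nn_integral (\<lambda>b. ennreal (\<phi> (4 * sqrt (cos (pi * s)^2 * b))))" for s
      using nn_integral_cos_sq[of "\<lambda>b. ennreal (\<phi> (4 * sqrt (cos (pi * s)^2 * b)))"] by simp
    then show ?thesis
      using nn_integral_cos_sq[of "\<lambda>a. arcsine_nn_integral (\<lambda>b. ennreal (\<phi> (4 * sqrt (a * b))))"]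
      by simp
  qed
  finally show ?thesis .
qed

lemma mahler_measure3_eq_arcsine_nn_integral:
  "mahler_measure3 (\<lambda>x1 x2 x3. 1 + x1 + x2 + x3 + x2 * x3) =
   enn2real (arcsine_nn_integral (\<lambda>a. arcsine_nn_integral (\<lambda>b. ennreal (ln_plus (4 * sqrt (a * b))))))"
proof -
  define W where "W y = (1 + cis (2*pi * fst y)) * (1 + cis (2*pi * snd y))" for y :: "real \<times> real"
  define B where "B = {0..1::real} \<times> {0..1::real}"
  have [measurable]: "W \<in> borel_measurable borel"
    unfolding W_def by (intro borel_measurable_continuous_onI continuous_intros)
  have [measurable]: "B \<in> sets borel"
    unfolding B_def by (intro borel_closed closed_Times closed_atLeastAtMost)
  have norm_W: "cmod (W y) = 4 * \<bar>cos (pi * fst y)\<bar> * \<bar>cos (pi * snd y)\<bar>" for y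
    by (simp add: W_def norm_mult norm_one_plus_cis)
  have "emeasure lborel B < \<infinity>"
    unfolding B_def by (intro emeasure_bounded_finite bounded_Times) auto
  moreover have "cmod (W y) \<le> 4" for y
    unfolding norm_W using mult_mono[of "\<bar>cos (pi * fst y)\<bar>" 1 "\<bar>cos (pi * snd y)\<bar>" 1] by simp
  moreover have "AE y in lborel. y \<in> B \<longrightarrow> cmod (W y) \<noteq> 1"
    unfolding norm_W B_def by (rule AE_abs_cos_prod_ne)
  ultimately have "(LINT t : {0..1} \<times> B | lborel. ln (cmod (cis (2*pi*fst t) + W (snd t)))) =
      (LINT y : B | lborel. ln_plus (cmod (W y)))"
    by (intro set_integral_ln_norm_cis_plus_prod) auto
  moreover have regroup: "1 + x1 + x2 + x3 + x2 * x3 = x1 + (1 + x2) * (1 + x3)" for x1 x2 x3 :: complex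
    by (simp add: algebra_simps)
  ultimately have "mahler_measure3 (\<lambda>x1 x2 x3. 1 + x1 + x2 + x3 + x2 * x3) =
      (LINT y : B | lborel. ln_plus (cmod (W y)))"
    unfolding mahler_measure3_def regroup B_def W_def by (simp only:)
  also have "\<dots> = enn2real (\<integral>\<^sup>+y. ennreal (indicator B y * ln_plus (cmod (W y))) \<partial>lborel)"
    unfolding set_lebesgue_integral_def real_scaleR_def
    by (rule integral_eq_nn_integral) (auto simp: ln_plus_nonneg)
  also have "\<dots> = enn2real
      (arcsine_nn_integral (\<lambda>a. arcsine_nn_integral (\<lambda>b. ennreal (ln_plus (4 * sqrt (a * b))))))"
    unfolding norm_W B_def by (simp only: nn_integral_unit_square_abs_cos[OF ln_plus_measurable])
  finally show ?thesis .
qed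

theorem theorem2:
  shows "mahler_measure3 (\<lambda>x1 x2 x3. 1 + x1 + x2 + x3 + x2 * x3) =
    - 1 / (2 * pi) *
      (LINT x : {0..1} | lborel. hyp2F1 (1/2) (1/2) 1 (1 - x\<^sup>2 / 16) * ln x)"
proof -
  define R where "R = (\<integral>\<^sup>+x. ennreal (indicator {0..1} x *
      - (hyp2F1 (1/2) (1/2) 1 (1 - x^2/16) * ln x)) \<partial>lborel)"
  have "mahler_measure3 (\<lambda>x1 x2 x3. 1 + x1 + x2 + x3 + x2 * x3) =
      enn2real (arcsine_nn_integral (\<lambda>a. arcsine_nn_integral (\<lambda>b. ennreal (ln_minus (4 * sqrt (a * b))))))"
    by (simp add: mahler_measure3_eq_arcsine_nn_integral arcsine_nn_integral2_ln_plus_eq_ln_minus)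
  also have "\<dots> = enn2real (ennreal (1 / (2 * pi)) * R)"
    using arcsine_nn_integral_product[of "\<lambda>g. ennreal (ln_minus (4 * sqrt g))"]
    by (simp add: nn_integral_ln_minus_product_density R_def)
  also have "\<dots> = - 1 / (2 * pi) * (LINT x : {0..1} | lborel. hyp2F1 (1/2) (1/2) 1 (1 - x\<^sup>2 / 16) * ln x)"
    by (simp add: set_integral_hyp2F1_ln R_def enn2real_mult)
  finally show ?thesis .
qed

end
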